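(* Let $\mu\ge\lambda$ and let $\eta'\in\{-1,0,1\}^{\mathbb Z}$ be any configuration with $\eta'(0)=1$ and $\eta'(x)=-1$ for all $x\ge1$. Let $\zeta_t^O$ and $\zeta_t^{\eta'}$ be the nearest neighbours three state contact processes with parameters $(\lambda,\mu)$ started respectively from the standard initial configuration and from $\eta'$, coupled by the graphical construction. Let $I_t=\{x:\zeta_t^O(x)=1\}$, $r_t=\sup I_t$ and $r_t'=\sup\{x:\zeta_t^{\eta'}(x)=1\}$. Then for all $t\ge0$, $r_t=r_t'$ on the event $\{I_t\neq\emptyset\}$.
   Context: The nearest neighbours three state contact process with parameters $(\lambda,\mu)$ has state space $\{-1,0,1\}^{\mathbb Z}$; each site $x$ makes transitions $-1\to1$ at rate $\lambda n_t(x)$, $0\to1$ at rate $\mu n_t(x)$, $1\to0$ at rate 1, where $n_t(x)$ is the number of $y\in\{x-1,x+1\}$ in state 1. The standard initial configuration has the origin in state 1 and all other sites in state $-1$. Graphical construction (for $\mu\ge\lambda$): for each $x\in\mathbb Z$ and $y\in\{x-1,x+1\}$ take independent Poisson processes of rate $\lambda$ (times of $\lambda$-arrows from $x$ to $y$) and rate $\mu-\lambda$ (times of $(\mu-\lambda)$-arrows from $x$ to $y$), and for each $x$ an independent rate-1 Poisson process (recovery marks at $x$). Given a starting configuration $\eta$, the process is defined from these: at the time of a $\lambda$-arrow from $x$ to $y$, if just before $x$ is in state 1 and $y$ in state $0$ or $-1$, then $y$ becomes 1; at the time of a $(\mu-\lambda)$-arrow from $x$ to $y$, if just before $x$ is in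 state 1 and $y$ in state 0, then $y$ becomes 1; at a recovery mark at $x$, if $x$ is in state 1 it becomes 0. Processes built from the same realization of these Poisson processes are said to be coupled by the graphical construction. *)

theory Defs
  imports Complex_Main "HOL-Library.Extended_Real"
begin

text \<open>A realization of the Poisson processes of the graphical construction.
  lam x y : times of lambda-arrows from x to y (only used for |x - y| = 1),
  dif x y : times of (mu - lambda)-arrows from x to y (only used for |x - y| = 1),
  rec x   : times of recovery marks at x.\<close>
record graph =
  lam :: "int \<Rightarrow> int \<Rightarrow> real set"
  dif :: "int \<Rightarrow> int \<Rightarrow> real set"
  rec :: "int \<Rightarrow> real set"

datatype mark = Rec int | Lam int int | Dif int int

definition mark_times :: "graph \<Rightarrow> mark \<Rightarrow> real set" where
  "mark_times G m = (case m of
      Rec x \<Rightarrow> rec G x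
    | Lam x y \<Rightarrow> (if \<bar>x - y\<bar> = 1 then lam G x y else {})
    | Dif x y \<Rightarrow> (if \<bar>x - y\<bar> = 1 then dif G x y else {}))"

definition edge_blocked :: "graph \<Rightarrow> real \<Rightarrow> int \<Rightarrow> bool" where
  "edge_blocked G T x \<longleftrightarrow>
     (lam G x (x+1) \<union> lam G (x+1) x \<union> dif G x (x+1) \<union> dif G (x+1) x) \<inter> {0..T} = {}"

text \<open>Almost-sure properties of a realization of the independent Poisson processes:
  all marks occur at positive times, each process has only finitely many marks in
  bounded time intervals, no two marks occur simultaneously, and for every time
  horizon T there are arbitrarily far edges on both sides not crossed by any arrow
  before T (this is what makes the graphical construction on Z well defined).\<close>
definition good_graph :: "graph \<Rightarrow> bool" where
  "good_graph G \<longleftrightarrow>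
     (\<forall>m. mark_times G m \<subseteq> {0<..}) \<and>
     (\<forall>m T. finite (mark_times G m \<inter> {..T})) \<and>
     (\<forall>m1 m2 t. t \<in> mark_times G m1 \<and> t \<in> mark_times G m2 \<longrightarrow> m1 = m2) \<and>
     (\<forall>T n. \<exists>x. x \<ge> n \<and> edge_blocked G T x) \<and>
     (\<forall>T n. \<exists>x. x \<le> n \<and> edge_blocked G T x)"

text \<open>Consistency of the realization with the rates: no lambda-arrows if lambda = 0,
  no (mu - lambda)-arrows if mu = lambda (Poisson processes of rate 0 are empty).\<close>
definition rates_ok :: "real \<Rightarrow> real \<Rightarrow> graph \<Rightarrow> bool" where
  "rates_ok la mu G \<longleftrightarrow>
     0 \<le> la \<and> la \<le> mu \<and>
     (la = 0 \<longrightarrow> (\<forall>x y. lam G x y = {})) \<and>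
     (mu = la \<longrightarrow> (\<forall>x y. dif G x y = {}))"

definition upd :: "graph \<Rightarrow> real \<Rightarrow> int \<Rightarrow> (int \<Rightarrow> int) \<Rightarrow> int" where
  "upd G t x xi =
     (if t \<in> rec G x \<and> xi x = 1 then 0
      else if (\<exists>y\<in>{x-1, x+1}. t \<in> lam G y x \<and> xi y = 1 \<and> xi x \<in> {0, -1}) then 1
      else if (\<exists>y\<in>{x-1, x+1}. t \<in> dif G y x \<and> xi y = 1 \<and> xi x = 0) then 1
      else xi x)"

definition config :: "(int \<Rightarrow> int) \<Rightarrow> bool" where
  "config \<eta> \<longleftrightarrow> (\<forall>x. \<eta> x \<in> {-1, 0, 1})"

text \<open>zeta (as a function of time t >= 0) is the three state contact process built from
  the realization G with initial configuration eta: each site is right-continuous and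
  piecewise constant, and at every time t > 0 the state of x is obtained from the states
  just before t by the rules of the graphical construction (so it only changes at marks).\<close>
definition tscp_path :: "graph \<Rightarrow> (int \<Rightarrow> int) \<Rightarrow> (real \<Rightarrow> int \<Rightarrow> int) \<Rightarrow> bool" where
  "tscp_path G \<eta> \<zeta> \<longleftrightarrow>
     (\<forall>x. \<zeta> 0 x = \<eta> x) \<and>
     (\<forall>t\<ge>0. config (\<zeta> t)) \<and>
     (\<forall>x. \<forall>t\<ge>0. \<exists>\<epsilon>>0. \<forall>u. t \<le> u \<and> u < t + \<epsilon> \<longrightarrow> \<zeta> u x = \<zeta> t x) \<and>
     (\<forall>x. \<forall>t>0. \<exists>\<epsilon>>0. \<epsilon> \<le> t \<and>
        (\<forall>y\<in>{x-1, x, x+1}. \<forall>u. t - \<epsilon> < u \<and> u < t \<longrightarrow> \<zeta> u y = \<zeta> (t - \<epsilon>/2) y) \<and>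
        \<zeta> t x = upd G t x (\<zeta> (t - \<epsilon>/2)))"

definition std_init :: "int \<Rightarrow> int" where
  "std_init x = (if x = 0 then 1 else -1)"

definition infected :: "(int \<Rightarrow> int) \<Rightarrow> int set" where
  "infected \<xi> = {x. \<xi> x = 1}"

text \<open>Supremum in the extended reals (sup of the empty set is -infinity).\<close>
definition rsup :: "int set \<Rightarrow> ereal" where
  "rsup S = (SUP x\<in>S. ereal (real_of_int x))"

end

theory Submission
  imports Defs
begin

text \<open>Fix t and two edges a < 0 \<le> b that no arrow crosses before time t. Sites outside
  the window (a, b] are never infected by either process, since no arrow reaches them from
  an infected site. Inside the window we carry the invariant that the two processes agree at
  every site weakly to the right of some infected site of \<zeta>O, and that every site ever
  infected in \<zeta>O has also been infected in \<zeta>'. An update can only break agreement at a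
  site x by an arrow from x + 1 infecting x in \<zeta>O, and then the second part of the
  invariant makes the same arrow infect x in \<zeta>' too. Hence at time t both processes
  agree to the right of any infected site of \<zeta>O, so their rightmost infected sites
  coincide.\<close>

definition arrow :: "graph \<Rightarrow> real \<Rightarrow> int \<Rightarrow> int \<Rightarrow> bool" where
  "arrow G u y x \<longleftrightarrow> y \<in> {x - 1, x + 1} \<and> (u \<in> lam G y x \<or> u \<in> dif G y x)"

lemma upd_cong:
  assumes "\<xi>1 x = \<xi>2 x" and "\<And>y. arrow G u y x \<Longrightarrow> \<xi>1 y = \<xi>2 y"
  shows "upd G u x \<xi>1 = upd G u x \<xi>2"
  using assms unfolding upd_def arrow_def by (smt (verit) insert_iff singletonD)

lemma upd_eq_one_cases:
  assumes "upd G u x \<xi> = 1" and "\<xi> x \<noteq> 1"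
  obtains y where "arrow G u y x" and "\<xi> y = 1"
  using assms unfolding upd_def arrow_def by (auto split: if_splits)

lemma upd_of_infected: "\<xi> x = 1 \<Longrightarrow> upd G u x \<xi> = (if u \<in> rec G x then 0 else 1)"
  unfolding upd_def by auto

lemma upd_neq_blank: "\<xi> x \<noteq> -1 \<Longrightarrow> upd G u x \<xi> \<noteq> -1"
  unfolding upd_def by auto

lemma upd_of_blank: "\<xi> x = -1 \<Longrightarrow> upd G u x \<xi> \<in> {-1, 1}"
  unfolding upd_def by auto

lemma upd_eq_one_mono:
  assumes "upd G u x \<xi> = 1" and "\<xi> x \<noteq> 1" and "u \<notin> rec G x"
    and "\<And>y. arrow G u y x \<Longrightarrow> \<xi> y = 1 \<Longrightarrow> \<xi>' y = 1"
    and "\<xi> x \<noteq> -1 \<Longrightarrow> \<xi>' x \<noteq> -1" and "\<xi>' x \<in> {-1, 0, 1}"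
  shows "upd G u x \<xi>' = 1"
  using assms unfolding upd_def arrow_def
  by (smt (verit) insert_iff singletonD)

lemma arrow_not_recovery:
  assumes "good_graph G" and "arrow G u y x"
  shows "u \<notin> rec G x"
proof
  assume "u \<in> rec G x"
  moreover have "\<bar>y - x\<bar> = 1" using assms(2) unfolding arrow_def by auto
  ultimately have "u \<in> mark_times G (Rec x)"
    and "u \<in> mark_times G (Lam y x) \<or> u \<in> mark_times G (Dif y x)"
    using assms(2) unfolding arrow_def mark_times_def by auto
  then show False using assms(1) unfolding good_graph_def by blast
qed

lemma arrow_into_blocked_window:
  assumes "edge_blocked G T a" and "edge_blocked G T b" and "0 \<le> u" "u \<le> T"
    and "x \<in> {a<..b}" and "arrow G u y x"
  shows "y \<in> {a<..b}"
proof (rule ccontr)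
  assume "y \<notin> {a<..b}"
  with assms(5,6) have "(y = a \<and> x = a + 1) \<or> (y = b + 1 \<and> x = b)"
    unfolding arrow_def by auto
  then show False using assms(1-4,6) unfolding edge_blocked_def arrow_def by auto
qed

definition coupled_on :: "int set \<Rightarrow> (int \<Rightarrow> int) \<Rightarrow> (int \<Rightarrow> int) \<Rightarrow> bool" where
  "coupled_on W \<xi> \<xi>' \<longleftrightarrow>
     (\<forall>x\<in>W. (\<exists>y\<in>W. y \<le> x \<and> \<xi> y = 1) \<longrightarrow> \<xi>' x = \<xi> x) \<and>
     (\<forall>x\<in>W. \<xi> x \<noteq> -1 \<longrightarrow> \<xi>' x \<noteq> -1)"

lemma coupled_on_upd_eq_one:
  assumes "good_graph G" and closed: "\<And>x y. x \<in> W \<Longrightarrow> arrow G u y x \<Longrightarrow> y \<in> W"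
    and coupled: "coupled_on W \<xi> \<xi>'" and "config \<xi>'"
    and "x \<in> W" and h: "upd G u x \<xi> = 1" "\<xi> x \<noteq> 1"
  shows "upd G u x \<xi>' = 1"
proof (rule upd_eq_one_mono[OF h])
  obtain y where "arrow G u y x" using upd_eq_one_cases[OF h] by blast
  then show "u \<notin> rec G x" by (rule arrow_not_recovery[OF assms(1)])
  show "\<xi>' y = 1" if "arrow G u y x" "\<xi> y = 1" for y
    using coupled closed[OF \<open>x \<in> W\<close> that(1)] that(2) unfolding coupled_on_def by force
  show "\<xi>' x \<noteq> -1" if "\<xi> x \<noteq> -1"
    using coupled \<open>x \<in> W\<close> that unfolding coupled_on_def by blast
  show "\<xi>' x \<in> {-1, 0, 1}" using assms(4) unfolding config_def by blast
qed

lemma coupled_on_upd_agree: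
  assumes "good_graph G" and closed: "\<And>x y. x \<in> W \<Longrightarrow> arrow G u y x \<Longrightarrow> y \<in> W"
    and coupled: "coupled_on W \<xi> \<xi>'" and "config \<xi>'"
    and x: "x \<in> W" and y: "y \<in> W" "y \<le> x" "upd G u y \<xi> = 1"
  shows "upd G u x \<xi>' = upd G u x \<xi>"
proof -
  have agree: "\<xi>' x = \<xi> x" if "x \<in> W" "y \<in> W" "y \<le> x" "\<xi> y = 1" for x y
    using coupled that unfolding coupled_on_def by blast
  show ?thesis
  proof (cases "\<exists>z\<in>W. z < x \<and> \<xi> z = 1")
    case True
    then obtain z where z: "z \<in> W" "z < x" "\<xi> z = 1" by blast
    show ?thesis
    proof (rule upd_cong)
      show "\<xi>' x = \<xi> x" using agree[OF x z(1)] z by simp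
      show "\<xi>' y' = \<xi> y'" if "arrow G u y' x" for y'
        using agree[OF closed[OF x that] z(1)] z that unfolding arrow_def by auto
    qed
  next
    case no_infected_left: False
    show ?thesis
    proof (cases "\<xi> x = 1")
      case True
      then show ?thesis using agree[OF x x] by (simp add: upd_of_infected)
    next
      case False
      \<comment> \<open>then the infection of y came from its right neighbour, which forces y = x\<close>
      have "\<xi> y \<noteq> 1" using False no_infected_left y by (cases "y = x") auto
      then obtain y' where "arrow G u y' y" "\<xi> y' = 1"
        using upd_eq_one_cases[OF y(3)] by blast
      moreover have "y' \<in> W" using closed[OF y(1) calculation(1)] .
      ultimately have "x < y'" using False no_infected_left by (metis linorder_neqE)
      with \<open>arrow G u y' y\<close> have "y = x" using y(2) unfolding arrow_def by auto
      with y(3) have "upd G u x \<xi> = 1" by simp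
      moreover have "upd G u x \<xi>' = 1"
        using assms(1) closed coupled assms(4) x calculation False by (rule coupled_on_upd_eq_one)
      ultimately show ?thesis by simp
    qed
  qed
qed

lemma coupled_on_upd:
  assumes "good_graph G" and closed: "\<And>x y. x \<in> W \<Longrightarrow> arrow G u y x \<Longrightarrow> y \<in> W"
    and "coupled_on W \<xi> \<xi>'" and "config \<xi>'"
  shows "coupled_on W (\<lambda>x. upd G u x \<xi>) (\<lambda>x. upd G u x \<xi>')"
proof -
  have "upd G u x \<xi>' = upd G u x \<xi>" if "x \<in> W" "y \<in> W" "y \<le> x" "upd G u y \<xi> = 1" for x y
    using assms that by (rule coupled_on_upd_agree)
  moreover have "upd G u x \<xi>' \<noteq> -1" if x: "x \<in> W" and h: "upd G u x \<xi> \<noteq> -1" for x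
  proof (cases "\<xi> x = -1")
    case True
    then have "upd G u x \<xi> = 1" "\<xi> x \<noteq> 1" using upd_of_blank[of \<xi> x G u] h by auto
    with assms x have "upd G u x \<xi>' = 1" by (rule coupled_on_upd_eq_one)
    then show ?thesis by simp
  next
    case False
    then have "\<xi>' x \<noteq> -1" using assms(3) x unfolding coupled_on_def by blast
    then show ?thesis by (rule upd_neq_blank)
  qed
  ultimately show ?thesis unfolding coupled_on_def by blast
qed

lemma blank_upd:
  assumes closed: "\<And>x y. x \<in> W \<Longrightarrow> arrow G u y x \<Longrightarrow> y \<in> W"
    and "\<forall>x\<in>W. \<xi> x = -1"
  shows "\<forall>x\<in>W. upd G u x \<xi> = -1"
proof (intro ballI, rule ccontr)
  fix x assume x: "x \<in> W" and "upd G u x \<xi> \<noteq> -1"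
  then have "upd G u x \<xi> = 1" using upd_of_blank[of \<xi> x] assms(2) by auto
  then obtain y where "arrow G u y x" "\<xi> y = 1" using upd_eq_one_cases assms(2) x by force
  then show False using closed[OF x] assms(2) by fastforce
qed

lemma real_nonneg_induct:
  fixes P :: "real \<Rightarrow> bool"
  assumes "P 0"
    and left: "\<And>m. 0 < m \<Longrightarrow> (\<And>u. 0 \<le> u \<Longrightarrow> u < m \<Longrightarrow> P u) \<Longrightarrow> P m"
    and right: "\<And>m. 0 \<le> m \<Longrightarrow> P m \<Longrightarrow> eventually P (at_right m)"
    and "0 \<le> s"
  shows "P s"
proof (rule ccontr)
  define F where "F = {u. 0 \<le> u \<and> \<not> P u}"
  define m where "m = Inf F"
  assume "\<not> P s"
  then have "s \<in> F" using assms(4) unfolding F_def by simp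
  moreover have bdd: "bdd_below F" unfolding F_def by (rule bdd_belowI[of _ 0]) auto
  ultimately have m_le: "m \<le> u" if "u \<in> F" for u
    using that cInf_lower unfolding m_def by blast
  have "0 \<le> m" unfolding m_def using \<open>s \<in> F\<close> by (intro cInf_greatest) (auto simp: F_def)
  moreover have "P u" if "0 \<le> u" "u < m" for u
    using m_le[of u] that unfolding F_def by force
  ultimately have "P m" using assms(1) left by (cases "m = 0") auto
  then obtain c where "m < c" and c: "\<And>u. m < u \<Longrightarrow> u < c \<Longrightarrow> P u"
    using right[OF \<open>0 \<le> m\<close>] unfolding eventually_at_right_field by blast
  have "c \<le> m" unfolding m_def
  proof (rule cInf_greatest)
    show "F \<noteq> {}" using \<open>s \<in> F\<close> by blast
    show "c \<le> u" if "u \<in> F" for u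
      using that m_le[OF that] c[of u] \<open>P m\<close> unfolding F_def by force
  qed
  then show False using \<open>m < c\<close> by simp
qed

lemma tscp_path_init: "tscp_path G \<eta> \<zeta> \<Longrightarrow> \<zeta> 0 = \<eta>"
  unfolding tscp_path_def by (elim conjE) (rule ext, blast)

lemma tscp_path_config: "tscp_path G \<eta> \<zeta> \<Longrightarrow> 0 \<le> t \<Longrightarrow> config (\<zeta> t)"
  unfolding tscp_path_def by (elim conjE) blast

lemma tscp_path_eventually_right:
  assumes "tscp_path G \<eta> \<zeta>" and "0 \<le> m"
  shows "eventually (\<lambda>u. \<zeta> u x = \<zeta> m x) (at_right m)"
proof -
  have "\<forall>x. \<forall>t\<ge>0. \<exists>\<epsilon>>0. \<forall>u. t \<le> u \<and> u < t + \<epsilon> \<longrightarrow> \<zeta> u x = \<zeta> t x"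
    using assms(1) unfolding tscp_path_def by (elim conjE)
  then obtain e where "e > 0" and const: "\<forall>u. m \<le> u \<and> u < m + e \<longrightarrow> \<zeta> u x = \<zeta> m x"
    using assms(2) by blast
  have "\<zeta> u x = \<zeta> m x" if "m < u" "u < m + e" for u
    using that by (intro const[rule_format]) simp
  with \<open>e > 0\<close> show ?thesis unfolding eventually_at_right_field by (intro exI[of _ "m + e"]) simp
qed

lemma tscp_path_eventually_left:
  assumes "tscp_path G \<eta> \<zeta>" and "0 < m"
  shows "eventually (\<lambda>v. \<zeta> m x = upd G m x (\<zeta> v)) (at_left m)"
proof -
  have step: "\<forall>x. \<forall>t>0. \<exists>\<epsilon>>0. \<epsilon> \<le> t \<and>
      (\<forall>y\<in>{x-1, x, x+1}. \<forall>u. t - \<epsilon> < u \<and> u < t \<longrightarrow> \<zeta> u y = \<zeta> (t - \<epsilon>/2) y) \<and>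
      \<zeta> t x = upd G t x (\<zeta> (t - \<epsilon>/2))"
    using assms(1) unfolding tscp_path_def by (elim conjE)
  obtain e where "e > 0"
    and const: "\<forall>y\<in>{x-1, x, x+1}. \<forall>v. m - e < v \<and> v < m \<longrightarrow> \<zeta> v y = \<zeta> (m - e/2) y"
    and jump: "\<zeta> m x = upd G m x (\<zeta> (m - e/2))"
    using step[rule_format, OF assms(2), of x] by blast
  have "\<zeta> m x = upd G m x (\<zeta> v)" if v: "m - e < v" "v < m" for v
  proof -
    have near: "\<zeta> v y = \<zeta> (m - e/2) y" if "y \<in> {x-1, x, x+1}" for y
      using const that v by blast
    show ?thesis unfolding jump
    proof (rule upd_cong)
      show "\<zeta> (m - e/2) x = \<zeta> v x" using near[of x] by simp
      show "\<zeta> (m - e/2) y = \<zeta> v y" if "arrow G m y x" for y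
        using near[of y] that unfolding arrow_def by auto
    qed
  qed
  with \<open>e > 0\<close> show ?thesis unfolding eventually_at_left_field by (intro exI[of _ "m - e"]) simp
qed

lemma tscp_path_pair_window_induct:
  fixes \<zeta> \<zeta>' :: "real \<Rightarrow> int \<Rightarrow> int"
  assumes path: "tscp_path G \<eta> \<zeta>" and path': "tscp_path G \<eta>' \<zeta>'" and "finite W"
    and local: "\<And>\<xi>1 \<xi>2 \<xi>1' \<xi>2'. \<forall>x\<in>W. \<xi>1 x = \<xi>2 x \<and> \<xi>1' x = \<xi>2' x \<Longrightarrow>
      Q \<xi>1 \<xi>1' \<Longrightarrow> Q \<xi>2 \<xi>2'"
    and init: "Q \<eta> \<eta>'"
    and step: "\<And>u \<xi> \<xi>'. 0 < u \<Longrightarrow> u \<le> T \<Longrightarrow> config \<xi> \<Longrightarrow> config \<xi>' \<Longrightarrow> Q \<xi> \<xi>' \<Longrightarrow>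
      Q (\<lambda>x. upd G u x \<xi>) (\<lambda>x. upd G u x \<xi>')"
    and "0 \<le> s" and "s \<le> T"
  shows "Q (\<zeta> s) (\<zeta>' s)"
proof -
  have "s \<le> T \<longrightarrow> Q (\<zeta> s) (\<zeta>' s)"
  proof (rule real_nonneg_induct[OF _ _ _ \<open>0 \<le> s\<close>])
    show "0 \<le> T \<longrightarrow> Q (\<zeta> 0) (\<zeta>' 0)"
      using init tscp_path_init[OF path] tscp_path_init[OF path'] by simp
  next
    fix m :: real assume "0 < m" and IH: "\<And>u. 0 \<le> u \<Longrightarrow> u < m \<Longrightarrow> u \<le> T \<longrightarrow> Q (\<zeta> u) (\<zeta>' u)"
    have ev: "eventually (\<lambda>v. v \<in> {0<..<m} \<and>
        (\<forall>x\<in>W. \<zeta> m x = upd G m x (\<zeta> v) \<and> \<zeta>' m x = upd G m x (\<zeta>' v))) (at_left m)"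
      by (intro eventually_conj eventually_at_left_real[OF \<open>0 < m\<close>]
          eventually_ball_finite[OF \<open>finite W\<close>] ballI
          tscp_path_eventually_left[OF path \<open>0 < m\<close>] tscp_path_eventually_left[OF path' \<open>0 < m\<close>])
    obtain v where v: "v \<in> {0<..<m}"
      and jump: "\<forall>x\<in>W. \<zeta> m x = upd G m x (\<zeta> v) \<and> \<zeta>' m x = upd G m x (\<zeta>' v)"
      using eventually_happens'[OF trivial_limit_at_left_real ev] by blast
    show "m \<le> T \<longrightarrow> Q (\<zeta> m) (\<zeta>' m)"
    proof
      assume "m \<le> T"
      with v IH have "Q (\<zeta> v) (\<zeta>' v)" by auto
      with v \<open>0 < m\<close> \<open>m \<le> T\<close> have "Q (\<lambda>x. upd G m x (\<zeta> v)) (\<lambda>x. upd G m x (\<zeta>' v))"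
        by (intro step tscp_path_config[OF path] tscp_path_config[OF path']) simp_all
      then show "Q (\<zeta> m) (\<zeta>' m)" by (rule local[rotated]) (use jump in auto)
    qed
  next
    fix m :: real assume "0 \<le> m" and IH: "m \<le> T \<longrightarrow> Q (\<zeta> m) (\<zeta>' m)"
    have "eventually (\<lambda>u. m < u \<and> (\<forall>x\<in>W. \<zeta> u x = \<zeta> m x \<and> \<zeta>' u x = \<zeta>' m x)) (at_right m)"
      by (intro eventually_conj eventually_at_right_less eventually_ball_finite[OF \<open>finite W\<close>] ballI
          tscp_path_eventually_right[OF path \<open>0 \<le> m\<close>] tscp_path_eventually_right[OF path' \<open>0 \<le> m\<close>])
    then show "eventually (\<lambda>u. u \<le> T \<longrightarrow> Q (\<zeta> u) (\<zeta>' u)) (at_right m)"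
    proof (rule eventually_mono, intro impI)
      fix u assume u: "m < u \<and> (\<forall>x\<in>W. \<zeta> u x = \<zeta> m x \<and> \<zeta>' u x = \<zeta>' m x)" and "u \<le> T"
      then have "Q (\<zeta> m) (\<zeta>' m)" using IH by simp
      then show "Q (\<zeta> u) (\<zeta>' u)" by (rule local[rotated]) (use u in auto)
    qed
  qed
  with \<open>s \<le> T\<close> show ?thesis by blast
qed

lemma never_infected_between_blocked_edges:
  assumes "tscp_path G \<eta> \<zeta>" and "edge_blocked G T a" and "edge_blocked G T b"
    and "\<forall>x\<in>{a<..b}. \<eta> x = -1" and "0 \<le> s" and "s \<le> T"
  shows "\<forall>x\<in>{a<..b}. \<zeta> s x = -1"
  using assms(1,1)
proof (rule tscp_path_pair_window_induct[where W = "{a<..b}" and Q = "\<lambda>\<xi> _. \<forall>x\<in>{a<..b}. \<xi> x = -1"])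
  show "\<forall>x\<in>{a<..b}. upd G u x \<xi> = -1"
    if u: "0 < u" "u \<le> T" and blank: "\<forall>x\<in>{a<..b}. \<xi> x = -1" for u \<xi>
    using arrow_into_blocked_window[OF assms(2,3) less_imp_le[OF u(1)] u(2)] blank
    by (rule blank_upd)
qed (use assms in auto)

lemma never_infected_right_of_blocked_edge:
  assumes "good_graph G" and "tscp_path G \<eta> \<zeta>" and "edge_blocked G T b"
    and "\<forall>x>b. \<eta> x = -1" and "0 \<le> s" and "s \<le> T" and "b < x"
  shows "\<zeta> s x = -1"
proof -
  obtain b' where "x \<le> b'" and "edge_blocked G T b'"
    using assms(1) unfolding good_graph_def by blast
  with assms show ?thesis using never_infected_between_blocked_edges[of G \<eta> \<zeta> T b b' s] by auto
qed

lemma never_infected_left_of_blocked_edge: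
  assumes "good_graph G" and "tscp_path G \<eta> \<zeta>" and "edge_blocked G T a"
    and "\<forall>x\<le>a. \<eta> x = -1" and "0 \<le> s" and "s \<le> T" and "x \<le> a"
  shows "\<zeta> s x = -1"
proof -
  obtain a' where "a' < x" and "edge_blocked G T a'"
    using assms(1) unfolding good_graph_def by (meson le_less_trans lt_ex)
  with assms show ?thesis using never_infected_between_blocked_edges[of G \<eta> \<zeta> T a' a s] by auto
qed

lemma coupled_on_blocked_window:
  assumes "good_graph G" and "tscp_path G \<eta> \<zeta>" and "tscp_path G \<eta>' \<zeta>'"
    and "edge_blocked G T a" and "edge_blocked G T b"
    and "coupled_on {a<..b} \<eta> \<eta>'" and "0 \<le> s" and "s \<le> T"
  shows "coupled_on {a<..b} (\<zeta> s) (\<zeta>' s)"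
  using assms(2,3)
proof (rule tscp_path_pair_window_induct[where W = "{a<..b}" and Q = "coupled_on {a<..b}"])
  show "coupled_on {a<..b} \<xi>2 \<xi>2'"
    if "\<forall>x\<in>{a<..b}. \<xi>1 x = \<xi>2 x \<and> \<xi>1' x = \<xi>2' x" and "coupled_on {a<..b} \<xi>1 \<xi>1'"
    for \<xi>1 \<xi>2 \<xi>1' \<xi>2'
    using that unfolding coupled_on_def by auto
  show "coupled_on {a<..b} (\<lambda>x. upd G u x \<xi>) (\<lambda>x. upd G u x \<xi>')"
    if u: "0 < u" "u \<le> T" and "config \<xi>" "config \<xi>'" "coupled_on {a<..b} \<xi> \<xi>'"
    for u \<xi> \<xi>'
    using assms(1) arrow_into_blocked_window[OF assms(4,5) less_imp_le[OF u(1)] u(2)] that(5,4)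
    by (rule coupled_on_upd)
qed (use assms in auto)

lemma coupled_on_std_init:
  assumes "\<eta>' 0 = 1" and "\<forall>x\<ge>1. \<eta>' x = -1"
  shows "coupled_on W std_init \<eta>'"
  using assms unfolding coupled_on_def std_init_def by force

lemma coupled_on_eq_right_of_infected:
  assumes "coupled_on {a<..b} \<xi> \<xi>'" and "y \<in> {a<..b}" and "\<xi> y = 1"
    and "\<forall>x>b. \<xi>' x = \<xi> x" and "y \<le> x"
  shows "\<xi>' x = \<xi> x"
proof (cases "x \<le> b")
  case True
  with assms(2,5) have "x \<in> {a<..b}" by simp
  with assms(1-3,5) show ?thesis unfolding coupled_on_def by blast
qed (use assms(4) in simp)

lemma rsup_eq_if_agree_above:
  assumes "y \<in> I" and "\<And>x. y \<le> x \<Longrightarrow> x \<in> I \<longleftrightarrow> x \<in> J"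
  shows "rsup I = rsup J"
proof -
  have "rsup A \<le> rsup B" if "y \<in> B" "\<And>x. y \<le> x \<Longrightarrow> x \<in> A \<longleftrightarrow> x \<in> B" for A B
    unfolding rsup_def
  proof (rule SUP_mono)
    fix x assume "x \<in> A"
    then have "max x y \<in> B" using that by (cases "x \<le> y") (auto simp: max_def)
    then show "\<exists>x'\<in>B. ereal (real_of_int x) \<le> ereal (real_of_int x')"
      by (intro bexI[of _ "max x y"]) auto
  qed
  moreover have "y \<in> J" using assms by simp
  ultimately show ?thesis using assms by (metis order.antisym)
qed

theorem mainTheorem5:
  fixes la mu :: real and G :: graph and \<eta>' :: "int \<Rightarrow> int"
    and \<zeta>O \<zeta>' :: "real \<Rightarrow> int \<Rightarrow> int" and t :: real
  assumes "mu \<ge> la" and "rates_ok la mu G" and "good_graph G"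
    and "config \<eta>'" and "\<eta>' 0 = 1" and "\<forall>x\<ge>1. \<eta>' x = -1"
    and "tscp_path G std_init \<zeta>O" and "tscp_path G \<eta>' \<zeta>'"
    and "t \<ge> 0" and "infected (\<zeta>O t) \<noteq> {}"
  shows "rsup (infected (\<zeta>O t)) = rsup (infected (\<zeta>' t))"
proof -
  note gg = assms(3) and path = assms(7) and path' = assms(8)
  obtain b where "0 \<le> b" and b: "edge_blocked G t b"
    using gg unfolding good_graph_def by blast
  obtain a where "a < 0" and a: "edge_blocked G t a"
    using gg unfolding good_graph_def by (meson le_less_trans lt_ex)
  have std_blank: "std_init x = -1" if "x \<noteq> 0" for x :: int
    using that by (simp add: std_init_def)
  have right: "\<zeta>O t x = -1 \<and> \<zeta>' t x = -1" if "b < x" for x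
    using never_infected_right_of_blocked_edge[OF gg path b] never_infected_right_of_blocked_edge[OF gg path' b]
      that \<open>0 \<le> b\<close> assms(6,9) std_blank by auto
  have left: "\<zeta>O t x = -1" if "x \<le> a" for x
    using never_infected_left_of_blocked_edge[OF gg path a] that \<open>a < 0\<close> assms(9) std_blank by auto
  obtain y where y: "\<zeta>O t y = 1"
    using assms(10) unfolding infected_def by blast
  with left[of y] right[of y] have "y \<in> {a<..b}"
    by (metis greaterThanAtMost_iff not_le one_neq_neg_one)
  moreover have "coupled_on {a<..b} (\<zeta>O t) (\<zeta>' t)"
    using coupled_on_blocked_window[OF gg path path' a b] coupled_on_std_init[OF assms(5,6)] assms(9)
    by blast
  ultimately have "\<zeta>' t x = \<zeta>O t x" if "y \<le> x" for x
    using coupled_on_eq_right_of_infected y right that by force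
  then show ?thesis using y by (intro rsup_eq_if_agree_above[of y]) (auto simp: infected_def)
qed

end
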